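(* Let $p$ be a prime number and let $x,y,z\in\mathbb{N}$ with $x\le y\le z$ satisfy $\frac{4}{p}=\frac{1}{x}+\frac{1}{y}+\frac{1}{z}$. If $\gcd(y,p)=p$, then $\gcd(z,p)=p$.
   Context: $\mathbb{N}$ denotes the positive integers. *)

theory Defs
  imports Complex_Main "HOL-Computational_Algebra.Primes"
begin

end

theory Submission
  imports Defs
begin

text \<open>
  Clearing denominators gives \<open>4xyz = p(yz + xz + xy)\<close>, and \<open>x \<le> y \<le> z\<close> forces \<open>4x \<le> 3p\<close>,
  so \<open>p\<close> does not divide \<open>x\<close>. Write \<open>y = pb\<close>. If \<open>p\<close> did not divide \<open>z\<close> either, cancelling \<open>p\<close>
  leaves \<open>xz(4b - 1) = pb(x + z)\<close>, so \<open>4b - 1 = pc\<close> and \<open>cxz = b(x + z)\<close>. The latter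
  factors as \<open>(cx - b)(cz - b) = b\<^sup>2\<close> with \<open>cx - b \<ge> 1\<close>, whence \<open>cz \<le> b(b + 1)\<close>; but
  \<open>z \<ge> y = pb\<close> gives \<open>cz \<ge> (4b - 1)b\<close>, which is larger.
\<close>

lemma unit_fractions_eq_imp_nat_eq:
  fixes k n x y z :: nat
  assumes "n > 0" "x > 0" "y > 0" "z > 0"
    and "real k / real n = 1 / real x + 1 / real y + 1 / real z"
  shows "k * x * y * z = n * (y * z + x * z + x * y)"
proof -
  have "real (k * x * y * z) = real (n * (y * z + x * z + x * y))"
    using assms by (simp add: field_simps)
  then show ?thesis
    by (simp only: of_nat_eq_iff)
qed

lemma smallest_denominator_bound:
  fixes k n x y z :: nat
  assumes "y > 0" "z > 0" "x \<le> y" "y \<le> z"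
    and "k * x * y * z = n * (y * z + x * z + x * y)"
  shows "k * x \<le> 3 * n"
proof -
  have "n * (x * z) \<le> n * (y * z)" "n * (x * y) \<le> n * (y * z)"
    using assms(3,4) by (simp_all add: mult_le_mono)
  moreover have "(k * x) * (y * z) = n * (y * z) + n * (x * z) + n * (x * y)"
    using assms(5) by (simp add: algebra_simps)
  ultimately have "(k * x) * (y * z) \<le> (3 * n) * (y * z)"
    by linarith
  then show ?thesis
    using assms(1,2) by simp
qed

lemma egyptian_pair_bound:
  fixes b c x z :: nat
  assumes "b > 0" "x > 0" "z > 0"
    and "c * x * z = b * (x + z)"
  shows "c * z \<le> b * (b + 1)"
proof -
  define u where "u = int c * int x - int b"
  define v where "v = int c * int z - int b"
  have eq: "int c * int x * int z = int b * (int x + int z)"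
    using arg_cong[OF assms(4), of int] by simp
  have "int b * int z < int c * int x * int z"
    using eq assms(1,2) by (simp add: algebra_simps)
  then have "u \<ge> 1"
    using assms(3) unfolding u_def by (simp add: mult_less_cancel_right)
  moreover have "u * v = int b * int b"
    using eq unfolding u_def v_def by (simp add: algebra_simps)
  ultimately have "v \<ge> 0"
    by (metis zero_le_mult_iff zero_le_square not_one_le_zero order_trans)
  then have "1 * v \<le> u * v"
    using \<open>u \<ge> 1\<close> by (intro mult_right_mono)
  then have "v \<le> int b * int b"
    using \<open>u * v = int b * int b\<close> by simp
  then have "int (c * z) \<le> int (b * (b + 1))"
    unfolding v_def by (simp add: algebra_simps)
  then show ?thesis
    by (simp only: of_nat_le_iff)
qed

lemma prime_middle_denominator_cofactor:
  fixes p x z b :: nat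
  assumes "prime p" "b > 0"
    and "4 * x * (p * b) * z = p * (p * b * z + x * z + x * (p * b))"
    and "\<not> p dvd x" "\<not> p dvd z"
  obtains c where "4 * b - 1 = p * c" "c * x * z = b * (x + z)"
proof -
  have "p * (4 * x * b * z) = p * (p * b * z + x * z + x * p * b)"
    using assms(3) by (simp add: algebra_simps)
  then have "4 * x * b * z = p * b * z + x * z + x * p * b"
    using prime_gt_0_nat[OF assms(1)] by simp
  then have cancelled: "x * z * (4 * b - 1) = p * (b * (x + z))"
    using assms(2) by (simp add: algebra_simps diff_mult_distrib2)
  then have "p dvd x * z * (4 * b - 1)"
    by simp
  then have "p dvd 4 * b - 1"
    using assms(1,4,5) by (simp add: prime_dvd_mult_iff)
  then obtain c where c: "4 * b - 1 = p * c" ..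
  have "p * (c * x * z) = p * (b * (x + z))"
    using cancelled unfolding c by (simp add: algebra_simps)
  then have "c * x * z = b * (x + z)"
    using prime_gt_0_nat[OF assms(1)] by simp
  with c show ?thesis
    using that by blast
qed

theorem lemma4:
  fixes p x y z :: nat
  assumes "prime p"
    and "x > 0" and "y > 0" and "z > 0"
    and "x \<le> y" and "y \<le> z"
    and "(4::real) / of_nat p = 1 / of_nat x + 1 / of_nat y + 1 / of_nat z"
    and "gcd y p = p"
  shows "gcd z p = p"
proof (rule ccontr)
  assume "gcd z p \<noteq> p"
  then have z_coprime: "\<not> p dvd z"
    using gcd_nat.absorb2 by blast
  have p_pos: "p > 0"
    using assms(1) prime_gt_0_nat by blast
  have clear: "4 * x * y * z = p * (y * z + x * z + x * y)"
    using unit_fractions_eq_imp_nat_eq[of p x y z 4] assms(2-4,7) p_pos by simp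
  then have "4 * x \<le> 3 * p"
    using smallest_denominator_bound assms(3-6) by blast
  then have x_coprime: "\<not> p dvd x"
    using assms(2) by (auto dest: dvd_imp_le)
  obtain b where y: "y = p * b"
    using assms(8) by (metis gcd_dvd1 dvdE)
  have b_pos: "b > 0"
    using y assms(3) by simp
  have "4 * x * (p * b) * z = p * (p * b * z + x * z + x * (p * b))"
    using clear y by simp
  then obtain c where c: "4 * b - 1 = p * c" and pair: "c * x * z = b * (x + z)"
    by (rule prime_middle_denominator_cofactor[OF assms(1) b_pos _ x_coprime z_coprime])
  have "b * (4 * b - 1) = c * y"
    using c y by simp
  also have "\<dots> \<le> c * z"
    using assms(6) by simp
  also have "\<dots> \<le> b * (b + 1)"
    using egyptian_pair_bound[OF b_pos assms(2,4) pair] .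
  finally have "4 * b - 1 \<le> b + 1"
    using b_pos mult_le_cancel1 by blast
  then show False
    using b_pos by linarith
qed

end
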